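(* Let $G(x)=\frac{1}{(1+x)^{3/2}}-1$. Let $s,\lambda\geq 0$ and let $v\in\mathbb{A}^s_\lambda$ be real-valued with $4K_s|v|_{0,\lambda}<1$. Then $$|G(v)|_{s,\lambda}\leq 18K_s|v|_{s,\lambda}.$$
   Context: Let $\mathbb{T}=\mathbb{R}/2\pi\mathbb{Z}$. For $f\in L^1(\mathbb{T})$, $\widehat f(n)=\frac{1}{2\pi}\int_{\mathbb{T}}f(x)e^{-inx}\,dx$. For $s,\lambda\geq 0$ the Wiener space $\mathbb{A}^s_\lambda$ is the space of $f\in L^1(\mathbb{T})$ with finite norm $|f|_{s,\lambda}:=\sum_{n\in\mathbb{Z}}(1+|n|)^s e^{\lambda|n|}|\widehat f(n)|$. The constant $K_s$ is $K_s=1$ for $0<s\leq 1$ and $K_s=2^{s-1}$ for $s=0$ or $s>1$. *)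

theory Defs
  imports "HOL-Analysis.Analysis"
begin

text \<open>Functions on the torus R/2piZ are represented by their restriction to [0, 2pi].
  Membership in L^1(T) is set-integrability on [0, 2pi] w.r.t. Lebesgue measure.\<close>

definition in_L1_torus :: "(real \<Rightarrow> real) \<Rightarrow> bool" where
  "in_L1_torus f \<longleftrightarrow> set_integrable lborel {0..2*pi} f"

definition fourier_coeff :: "(real \<Rightarrow> real) \<Rightarrow> int \<Rightarrow> complex" where
  "fourier_coeff f n =
     complex_of_real (1 / (2*pi)) *
     (LINT x:{0..2*pi}|lborel. complex_of_real (f x) * exp (- \<i> * of_int n * of_real x))"

text \<open>Wiener norm, valued in [0, infinity]; f is in A^s_lambda iff it is in L^1 and this is finite.\<close>
definition wiener_norm :: "real \<Rightarrow> real \<Rightarrow> (real \<Rightarrow> real) \<Rightarrow> ennreal" where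
  "wiener_norm s lam f =
     (\<integral>\<^sup>+ n. ennreal ((1 + real_of_int \<bar>n\<bar>) powr s * exp (lam * real_of_int \<bar>n\<bar>)
                         * cmod (fourier_coeff f n)) \<partial>count_space (UNIV :: int set))"

definition K_const :: "real \<Rightarrow> real" where
  "K_const s = (if 0 < s \<and> s \<le> 1 then 1 else 2 powr (s - 1))"

definition G_fun :: "real \<Rightarrow> real" where
  "G_fun x = 1 / ((1 + x) powr (3/2)) - 1"

end

theory Submission
  imports Defs
begin

text \<open>
  Write \<open>|f|\<^sub>s\<close> for \<open>|f|\<^sub>s\<^sub>,\<^sub>\<lambda>\<close>, with \<open>\<lambda>\<close> fixed. As the weights are at least \<open>1\<close>
  and \<open>K\<^sub>s \<ge> 1/2\<close>, the hypothesis makes the Fourier coefficients \<open>a\<close> of \<open>v\<close> absolutely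
  summable with \<open>\<Sum>|a\<^sub>n| \<le> |v|\<^sub>0 < 1/2\<close>. By uniqueness of Fourier coefficients, \<open>v\<close> is
  a.e.\ the sum of its Fourier series, so \<open>|v| < 1/2\<close> and \<open>G(v) = \<Sum>\<^sub>k c\<^sub>k v\<^sup>k\<close> with the
  binomial coefficients \<open>c\<^sub>k\<close> of \<open>(1 + x)\<^sup>-\<^sup>3\<^sup>/\<^sup>2\<close>; integrating termwise, the Fourier
  coefficients of \<open>G(v)\<close> are \<open>\<Sum>\<^sub>k c\<^sub>k\<close> times those of \<open>v\<^sup>k\<close>, which are iterated
  convolutions of \<open>a\<close>. The inequality \<open>(1 + |n|)\<^sup>s \<le> K\<^sub>s ((1 + |m|)\<^sup>s + (1 + |n - m|)\<^sup>s)\<close>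
  gives the Leibniz-type rule \<open>|b * c|\<^sub>s \<le> K\<^sub>s (|b|\<^sub>s |c|\<^sub>0 + |b|\<^sub>0 |c|\<^sub>s)\<close>, hence
  \<open>|v\<^sup>k|\<^sub>s \<le> k (K\<^sub>s |v|\<^sub>0)\<^sup>k\<^sup>-\<^sup>1 |v|\<^sub>s\<close> for \<open>s > 0\<close> (where \<open>K\<^sub>s \<ge> 1\<close>) and
  \<open>|v\<^sup>k|\<^sub>0 \<le> |v|\<^sub>0\<^sup>k\<close> for \<open>s = 0\<close> (where \<open>K\<^sub>0 = 1/2\<close>). Together with \<open>|c\<^sub>k| \<le> k + 1\<close>
  this bounds \<open>|G(v)|\<^sub>s\<close> by geometric series summing to at most \<open>18 K\<^sub>s |v|\<^sub>s\<close>.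
\<close>

section \<open>Integration and summation\<close>

lemma set_integrable_bounded:
  fixes h :: "real \<Rightarrow> 'b::{banach, second_countable_topology}"
  assumes "set_borel_measurable lborel A h" "A \<in> sets lborel" "emeasure lborel A < \<infinity>"
    and "AE x in lborel. x \<in> A \<longrightarrow> norm (h x) \<le> B"
  shows "set_integrable lborel A h"
  unfolding set_integrable_def
  by (rule integrableI_bounded_set[where A=A and B=B])
     (use assms in \<open>auto simp: set_borel_measurable_def indicator_def\<close>)

lemma set_integrable_mult_bounded:
  fixes w h :: "real \<Rightarrow> complex"
  assumes w: "set_integrable lborel A w" and h: "h \<in> borel_measurable borel"
    and bnd: "AE x in lborel. x \<in> A \<longrightarrow> norm (h x) \<le> B"
  shows "set_integrable lborel A (\<lambda>x. w x * h x)"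
proof (rule set_integrable_bound[where f="\<lambda>x. of_real B * w x"])
  show "set_integrable lborel A (\<lambda>x. of_real B * w x)"
    using w by (rule set_integrable_mult_right)
  have eq: "(\<lambda>x. indicat_real A x *\<^sub>R (w x * h x)) = (\<lambda>x. (indicat_real A x *\<^sub>R w x) * h x)"
    by (simp add: fun_eq_iff indicator_def)
  have "(\<lambda>x. indicat_real A x *\<^sub>R w x) \<in> borel_measurable lborel"
    using w unfolding set_integrable_def by (rule borel_measurable_integrable)
  then show "set_borel_measurable lborel A (\<lambda>x. w x * h x)"
    unfolding set_borel_measurable_def eq using h by (intro borel_measurable_times) simp_all
  show "AE x in lborel. x \<in> A \<longrightarrow> norm (w x * h x) \<le> norm (of_real B * w x)"
    using bnd by eventually_elim
      (auto simp: norm_mult mult.commute intro!: mult_right_mono order.trans[OF _ abs_ge_self])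
qed

lemma set_integral_suminf:
  fixes f :: "nat \<Rightarrow> 'a \<Rightarrow> complex" and h :: "'a \<Rightarrow> real"
  assumes meas: "\<And>k. set_borel_measurable M A (f k)"
    and h: "set_integrable M A h"
    and bnd: "\<And>k. AE x in M. x \<in> A \<longrightarrow> norm (f k x) \<le> c k * h x"
    and c: "summable c" and c_nonneg: "\<And>k. c k \<ge> 0"
  shows "set_integrable M A (\<lambda>x. \<Sum>k. f k x)"
    and "(\<lambda>k. LINT x:A|M. f k x) sums (LINT x:A|M. (\<Sum>k. f k x))"
proof -
  define g where "g k x = indicat_real A x *\<^sub>R f k x" for k x
  define H where "H x = norm (indicat_real A x *\<^sub>R h x)" for x
  have H: "integrable M H"
    using h unfolding H_def set_integrable_def by (rule integrable_norm)
  have g_bound: "AE x in M. norm (g k x) \<le> c k * H x" for k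
    using bnd[of k] by eventually_elim
      (auto simp: g_def H_def indicator_def intro: order.trans[OF _ mult_left_mono[OF abs_ge_self]]
        c_nonneg)
  have g: "integrable M (g k)" for k
  proof (rule Bochner_Integration.integrable_bound)
    show "integrable M (\<lambda>x. c k * H x)" using H by simp
    show "g k \<in> borel_measurable M"
      using meas[of k] unfolding g_def set_borel_measurable_def .
    show "AE x in M. norm (g k x) \<le> norm (c k * H x)"
      using g_bound[of k] by eventually_elim (auto simp: H_def c_nonneg)
  qed
  have summable_pointwise: "AE x in M. summable (\<lambda>k. norm (g k x))"
  proof -
    have "AE x in M. \<forall>k. norm (g k x) \<le> c k * H x"
      using g_bound by (simp add: AE_all_countable)
    then show ?thesis
    proof eventually_elim
      case (elim x)
      then show ?case by (intro summable_comparison_test'[OF summable_mult2[OF c, of "H x"]]) simp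
    qed
  qed
  have summable_integrals: "summable (\<lambda>k. LINT x|M. norm (g k x))"
  proof (rule summable_comparison_test)
    show "summable (\<lambda>k. c k * integral\<^sup>L M H)" using c by (rule summable_mult2)
    have "(LINT x|M. norm (g k x)) \<le> (LINT x|M. c k * H x)" for k
      using g_bound[of k] g[of k] H by (intro integral_mono_AE) auto
    then show "\<exists>N. \<forall>k\<ge>N. norm (LINT x|M. norm (g k x)) \<le> c k * integral\<^sup>L M H"
      by simp
  qed
  have sum_g: "(\<lambda>x. \<Sum>k. g k x) = (\<lambda>x. indicat_real A x *\<^sub>R (\<Sum>k. f k x))"
    by (auto simp: fun_eq_iff g_def indicator_def)
  show "set_integrable M A (\<lambda>x. \<Sum>k. f k x)"
    using integrable_suminf[OF g summable_pointwise summable_integrals]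
    unfolding sum_g set_integrable_def .
  show "(\<lambda>k. LINT x:A|M. f k x) sums (LINT x:A|M. (\<Sum>k. f k x))"
    using sums_integral[OF g summable_pointwise summable_integrals]
    unfolding sum_g set_lebesgue_integral_def by (simp add: g_def)
qed

lemma set_integral_sums_AE:
  fixes f :: "nat \<Rightarrow> 'a \<Rightarrow> complex" and h :: "'a \<Rightarrow> real"
  assumes meas: "\<And>k. set_borel_measurable M A (f k)"
    and h: "set_integrable M A h"
    and bnd: "\<And>k. AE x in M. x \<in> A \<longrightarrow> norm (f k x) \<le> c k * h x"
    and c: "summable c" "\<And>k. c k \<ge> 0"
    and F: "set_borel_measurable M A F" "AE x in M. x \<in> A \<longrightarrow> (\<lambda>k. f k x) sums F x"
  shows "(\<lambda>k. LINT x:A|M. f k x) sums (LINT x:A|M. F x)"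
proof -
  note termwise = set_integral_suminf[OF meas h bnd c]
  have "(LINT x:A|M. (\<Sum>k. f k x)) = (LINT x:A|M. F x)"
    unfolding set_lebesgue_integral_def
  proof (rule integral_cong_AE)
    show "(\<lambda>x. indicator A x *\<^sub>R (\<Sum>k. f k x)) \<in> borel_measurable M"
      using termwise(1) unfolding set_integrable_def by (rule borel_measurable_integrable)
    show "(\<lambda>x. indicator A x *\<^sub>R F x) \<in> borel_measurable M"
      using F(1) unfolding set_borel_measurable_def .
    show "AE x in M. indicator A x *\<^sub>R (\<Sum>k. f k x) = indicator A x *\<^sub>R F x"
      using F(2) by eventually_elim (auto simp: indicator_def sums_iff)
  qed
  with termwise(2) show ?thesis by simp
qed

lemma ennreal_norm_le_suminf_norm:
  fixes f :: "nat \<Rightarrow> 'a::banach"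
  assumes "f sums S"
  shows "ennreal (norm S) \<le> (\<Sum>k. ennreal (norm (f k)))"
proof (cases "summable (\<lambda>k. norm (f k))")
  case True
  have "ennreal (norm S) \<le> ennreal (\<Sum>k. norm (f k))"
    using summable_norm[OF True] by (intro ennreal_leI) (simp add: sums_unique[OF assms])
  also have "\<dots> = (\<Sum>k. ennreal (norm (f k)))"
    by (rule suminf_ennreal2[OF norm_ge_zero True, symmetric])
  finally show ?thesis .
next
  case False
  have "(\<Sum>k. ennreal (norm (f k))) = top"
  proof (rule ccontr)
    assume "(\<Sum>k. ennreal (norm (f k))) \<noteq> top"
    then have "summable (\<lambda>k. norm (f k))"
      by (intro summable_suminf_not_top) simp_all
    with False show False by contradiction
  qed
  then show ?thesis by simp
qed

lemma nn_integral_int_eq_suminf: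
  "(\<integral>\<^sup>+ m. f m \<partial>count_space UNIV) = (\<Sum>k. f (int_decode k))"
  by (simp add: nn_integral_bij_count_space[OF bij_int_decode, symmetric]
    nn_integral_count_space_nat)

lemma nn_integral_int_shift:
  "(\<integral>\<^sup>+ n. f (n - m) \<partial>count_space UNIV) = (\<integral>\<^sup>+ n. f n \<partial>count_space (UNIV :: int set))"
  by (rule nn_integral_bij_count_space) (rule bij_betwI[where g="\<lambda>n. n + m"], auto)

lemma tendsto_infdist_cutoff_indicator:
  assumes "closed A" "A \<noteq> {}"
  shows "(\<lambda>j. max 0 (1 - real j * infdist z A)) \<longlonglongrightarrow> indicator A z"
proof (cases "z \<in> A")
  case False
  then have d: "infdist z A > 0"
    using infdist_pos_not_in_closed[OF assms] by blast
  obtain N :: nat where N: "1 / infdist z A < N"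
    using reals_Archimedean2 by blast
  have "max 0 (1 - real j * infdist z A) = 0" if "N \<le> j" for j
  proof -
    have "1 < real N * infdist z A" using N d by (simp add: field_simps)
    also have "\<dots> \<le> real j * infdist z A" using that d by (intro mult_right_mono) auto
    finally show ?thesis by simp
  qed
  then have "eventually (\<lambda>j. max 0 (1 - real j * infdist z A) = 0) sequentially"
    by (auto simp: eventually_sequentially)
  then show ?thesis
    using False by (simp add: tendsto_eventually)
qed simp

lemma nn_integral_eq_nn_integral_uminus_if_integral_eq_0:
  fixes f :: "'a \<Rightarrow> real"
  assumes f: "integrable M f" and "integral\<^sup>L M f = 0"
  shows "(\<integral>\<^sup>+ x. ennreal (f x) \<partial>M) = (\<integral>\<^sup>+ x. ennreal (- f x) \<partial>M)"
proof -
  have "(\<integral>\<^sup>+ x. ennreal (f x) \<partial>M) = ennreal (enn2real (\<integral>\<^sup>+ x. ennreal (f x) \<partial>M))"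
    using integrableD(2)[OF f] by (simp add: less_top)
  also have "enn2real (\<integral>\<^sup>+ x. ennreal (f x) \<partial>M) = enn2real (\<integral>\<^sup>+ x. ennreal (- f x) \<partial>M)"
    using real_lebesgue_integral_def[OF f] assms(2) by simp
  also have "ennreal \<dots> = (\<integral>\<^sup>+ x. ennreal (- f x) \<partial>M)"
    using integrableD(3)[OF f] by (simp add: less_top)
  finally show ?thesis .
qed

lemma AE_eq_0_if_set_integral_Ioi_eq_0:
  fixes u :: "real \<Rightarrow> real"
  assumes u: "integrable lborel u" and Ioi: "\<And>x. (LINT y:{x<..}|lborel. u y) = 0"
  shows "AE y in lborel. u y = 0"
proof -
  have [measurable]: "u \<in> borel_measurable borel"
    using u by auto
  have eq: "(\<integral>\<^sup>+ y. ennreal (u y) * indicator {x<..} y \<partial>lborel) =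
            (\<integral>\<^sup>+ y. ennreal (- u y) * indicator {x<..} y \<partial>lborel)" for x
  proof -
    have "integrable lborel (\<lambda>y. indicator {x<..} y * u y)"
      using integrable_mult_indicator[OF _ u, of "{x<..}"] by simp
    note pos_eq_neg = nn_integral_eq_nn_integral_uminus_if_integral_eq_0[OF this]
    have "(\<integral>\<^sup>+ y. ennreal (u y) * indicator {x<..} y \<partial>lborel) =
            (\<integral>\<^sup>+ y. ennreal (indicator {x<..} y * u y) \<partial>lborel)"
      by (intro nn_integral_cong) (simp add: indicator_def)
    also have "\<dots> = (\<integral>\<^sup>+ y. ennreal (- (indicator {x<..} y * u y)) \<partial>lborel)"
      using pos_eq_neg Ioi[of x] by (simp add: set_lebesgue_integral_def)
    also have "\<dots> = (\<integral>\<^sup>+ y. ennreal (- u y) * indicator {x<..} y \<partial>lborel)"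
      by (intro nn_integral_cong) (simp add: indicator_def)
    finally show ?thesis .
  qed
  have "density lborel (\<lambda>y. ennreal (u y)) = density lborel (\<lambda>y. ennreal (- u y))"
  proof (rule measure_eqI_lessThan)
    fix x
    show "emeasure (density lborel (\<lambda>y. ennreal (u y))) {x<..} =
          emeasure (density lborel (\<lambda>y. ennreal (- u y))) {x<..}"
      by (simp add: emeasure_density eq)
    have "emeasure (density lborel (\<lambda>y. ennreal (u y))) {x<..} =
            (\<integral>\<^sup>+ y. ennreal (u y) * indicator {x<..} y \<partial>lborel)"
      by (simp add: emeasure_density)
    also have "\<dots> \<le> (\<integral>\<^sup>+ y. ennreal (u y) \<partial>lborel)"
      by (intro nn_integral_mono) (simp add: indicator_def)
    also have "\<dots> < \<infinity>"
      using integrableD(2)[OF u] by (simp add: less_top)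
    finally show "emeasure (density lborel (\<lambda>y. ennreal (u y))) {x<..} < \<infinity>" .
  qed simp_all
  then have "AE y in lborel. ennreal (u y) = ennreal (- u y)"
    using finite_density_unique[of "\<lambda>y. ennreal (u y)" lborel "\<lambda>y. ennreal (- u y)"]
      integrableD(2)[OF u]
    by simp
  then show ?thesis
  proof eventually_elim
    case (elim y)
    then show ?case
      by (cases "u y \<ge> 0") (simp_all add: ennreal_neg ennreal_eq_0_iff)
  qed
qed

section \<open>Fourier coefficients of complex-valued functions\<close>

definition fourier_coeff_complex :: "(real \<Rightarrow> complex) \<Rightarrow> int \<Rightarrow> complex" where
  "fourier_coeff_complex F n = complex_of_real (1 / (2*pi)) *
     (LINT x:{0..2*pi}|lborel. F x * exp (- \<i> * of_int n * of_real x))"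

lemma fourier_coeff_eq_complex: "fourier_coeff f
  = fourier_coeff_complex (\<lambda>x. complex_of_real (f x))"
  by (simp add: fun_eq_iff fourier_coeff_def fourier_coeff_complex_def)

lemma set_integral_eq_fourier_coeff_complex:
  "(LINT x:{0..2*pi}|lborel. F x * exp (- \<i> * of_int n * of_real x)) =
     of_real (2*pi) * fourier_coeff_complex F n"
  by (simp add: fourier_coeff_complex_def)

lemma set_integrable_mult_exp:
  assumes "set_integrable lborel {0..2*pi} F"
  shows "set_integrable lborel {0..2*pi} (\<lambda>x. F x * exp (- \<i> * of_int n * of_real x))"
  by (rule set_integrable_mult_bounded[OF assms, where B=1]) auto

lemma fourier_coeff_complex_cmult:
  "fourier_coeff_complex (\<lambda>x. c * F x) n = c * fourier_coeff_complex F n"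
  by (simp add: fourier_coeff_complex_def mult.assoc)

lemma fourier_coeff_complex_diff:
  assumes "set_integrable lborel {0..2*pi} F" "set_integrable lborel {0..2*pi} G"
  shows "fourier_coeff_complex (\<lambda>x. F x - G x) n
    = fourier_coeff_complex F n - fourier_coeff_complex G n"
  using set_integral_diff(2)[OF set_integrable_mult_exp[OF assms(1)]
    set_integrable_mult_exp[OF assms(2)]]
  by (simp add: fourier_coeff_complex_def left_diff_distrib right_diff_distrib)

lemma fourier_coeff_complex_1: "fourier_coeff_complex (\<lambda>x. 1) n = (if n = 0 then 1 else 0)"
proof (cases "n = 0")
  case True
  have "(LINT x:{0..2*pi}|lborel. (1::complex)) = of_real (2*pi)"
    by (subst set_integral_const) (auto simp: scaleR_conv_of_real)
  then show ?thesis using True by (simp add: fourier_coeff_complex_def)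
next
  case False
  define c where "c = - \<i> * of_int n"
  have "c \<noteq> 0" using False by (simp add: c_def)
  have "((\<lambda>x. exp (c * of_real x) / c) has_vector_derivative exp (c * of_real x)) (at x within S)"
    for x :: real and S
    by (rule has_vector_derivative_real_field[where f="\<lambda>z. exp (c * z) / c"])
       (use \<open>c \<noteq> 0\<close> in \<open>auto intro!: derivative_eq_intros\<close>)
  then have "((\<lambda>x. exp (c * of_real x)) has_integral
               (exp (c * of_real (2*pi)) / c - exp (c * of_real 0) / c)) {0..2*pi}"
    by (intro fundamental_theorem_of_calculus) auto
  moreover have "exp (c * of_real (2*pi)) = 1"
    using exp_integer_2pi[of "- of_int n"] by (simp add: c_def algebra_simps)
  ultimately have "((\<lambda>x. exp (c * of_real x)) has_integral 0) {0..2*pi}"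
    by simp
  moreover have "set_integrable lborel {0..2*pi} (\<lambda>x. exp (c * of_real x))"
    by (intro borel_integrable_atLeastAtMost' continuous_intros)
  ultimately have "(LINT x:{0..2*pi}|lborel. exp (c * of_real x)) = 0"
    using set_borel_integral_eq_integral(2) by (metis integral_unique)
  then show ?thesis using False by (simp add: fourier_coeff_complex_def c_def)
qed

section \<open>Absolutely convergent Fourier series\<close>

text \<open>Sums over \<open>\<int>\<close> are taken along the enumeration \<^const>\<open>int_decode\<close>; under
  absolute summability the order is irrelevant.\<close>

abbreviation abs_summable_int :: "(int \<Rightarrow> complex) \<Rightarrow> bool" where
  "abs_summable_int b \<equiv> summable (\<lambda>k. norm (b (int_decode k)))"

abbreviation l1_norm_int :: "(int \<Rightarrow> complex) \<Rightarrow> real" where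
  "l1_norm_int b \<equiv> \<Sum>k. norm (b (int_decode k))"

definition fourier_series :: "(int \<Rightarrow> complex) \<Rightarrow> real \<Rightarrow> complex" where
  "fourier_series b x = (\<Sum>k. b (int_decode k) * exp (\<i> * of_int (int_decode k) * of_real x))"

lemma summable_norm_fourier_series_terms:
  "abs_summable_int b \<Longrightarrow>
     summable (\<lambda>k. norm (b (int_decode k) * exp (\<i> * of_int (int_decode k) * of_real x)))"
  by (simp add: norm_mult)

lemma norm_fourier_series_le: "abs_summable_int b \<Longrightarrow> norm (fourier_series b x) \<le> l1_norm_int b"
  unfolding fourier_series_def
  using summable_norm[OF summable_norm_fourier_series_terms] by (simp add: norm_mult)

lemma fourier_series_measurable [measurable]: "fourier_series b \<in> borel_measurable borel"
  unfolding fourier_series_def[abs_def] by measurable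

lemma fourier_coeff_complex_mult_fourier_series:
  assumes F: "set_integrable lborel {0..2*pi} F" and b: "abs_summable_int b"
  shows "set_integrable lborel {0..2*pi} (\<lambda>x. F x * fourier_series b x)"
    and "(\<lambda>k. b (int_decode k) * fourier_coeff_complex F (n - int_decode k)) sums
           fourier_coeff_complex (\<lambda>x. F x * fourier_series b x) n"
proof -
  show "set_integrable lborel {0..2*pi} (\<lambda>x. F x * fourier_series b x)"
    by (rule set_integrable_mult_bounded[OF F fourier_series_measurable])
       (use norm_fourier_series_le[OF b] in auto)
  define f where "f k x = b (int_decode k) * (F x
    * exp (- \<i> * of_int (n - int_decode k) * of_real x))"
    for k x
  have meas: "set_borel_measurable lborel {0..2*pi} (f k)" for k
  proof -
    have "set_integrable lborel {0..2*pi} (f k)"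
      unfolding f_def by (intro set_integrable_mult_right set_integrable_mult_exp F)
    then show ?thesis
      unfolding set_integrable_def set_borel_measurable_def by (rule borel_measurable_integrable)
  qed
  have bnd: "AE x in lborel. x \<in> {0..2*pi} \<longrightarrow> norm (f k x) \<le> norm (b (int_decode k)) * norm (F x)"
    for k
    by (simp add: f_def norm_mult)
  note termwise = set_integral_suminf[OF meas set_integrable_norm[OF F] bnd b]
  have sum_f: "(\<Sum>k. f k x) = F x * fourier_series b x * exp (- \<i> * of_int n * of_real x)" for x
  proof -
    have "f k x = b (int_decode k) * exp (\<i> * of_int (int_decode k) * of_real x) *
                    (F x * exp (- \<i> * of_int n * of_real x))" for k
      by (simp add: f_def exp_add[symmetric] algebra_simps)
    then have "(\<Sum>k. f k x) = fourier_series b x * (F x * exp (- \<i> * of_int n * of_real x))"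
      unfolding fourier_series_def
      using summable_norm_cancel[OF summable_norm_fourier_series_terms[OF b]]
      by (simp add: suminf_mult2[symmetric])
    then show ?thesis by (simp add: mult_ac)
  qed
  have "(LINT x:{0..2*pi}|lborel. f k x) =
          of_real (2*pi) * (b (int_decode k) * fourier_coeff_complex F (n - int_decode k))" for k
    unfolding f_def set_integral_mult_right set_integral_eq_fourier_coeff_complex by simp
  then have "(\<lambda>k. of_real (2*pi) * (b (int_decode k) * fourier_coeff_complex F (n - int_decode k)))
               sums (of_real (2*pi) * fourier_coeff_complex (\<lambda>x. F x * fourier_series b x) n)"
    using termwise(2) unfolding sum_f set_integral_eq_fourier_coeff_complex by simp
  from sums_mult[OF this, of "1 / (2*pi)"]
  show "(\<lambda>k. b (int_decode k) * fourier_coeff_complex F (n - int_decode k)) sums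
           fourier_coeff_complex (\<lambda>x. F x * fourier_series b x) n"
    by (simp add: field_simps)
qed

lemma fourier_coeff_complex_fourier_series:
  assumes b: "abs_summable_int b"
  shows "fourier_coeff_complex (fourier_series b) n = b n"
proof -
  have const: "set_integrable lborel {0..2*pi} (\<lambda>x. 1::complex)"
    by (intro borel_integrable_atLeastAtMost' continuous_intros)
  have "n - int_decode k = 0 \<longleftrightarrow> k = int_encode n" for k
    by (metis eq_iff_diff_eq_0 int_decode_inverse int_encode_inverse)
  then have "(\<lambda>k. b (int_decode k) * fourier_coeff_complex (\<lambda>x. 1) (n - int_decode k)) =
               (\<lambda>k. if k = int_encode n then b n else 0)"
    by (auto simp: fun_eq_iff fourier_coeff_complex_1)
  with fourier_coeff_complex_mult_fourier_series(2)[OF const b, of n]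
  have "(\<lambda>k. if k = int_encode n then b n else 0) sums fourier_coeff_complex (fourier_series b) n"
    by simp
  moreover have "(\<lambda>k. if k = int_encode n then b n else 0) sums b n"
    using sums_single[of "int_encode n" "\<lambda>_. b n"] by simp
  ultimately show ?thesis using sums_unique2 by blast
qed

definition fourier_power_coeff :: "(int \<Rightarrow> complex) \<Rightarrow> nat \<Rightarrow> int \<Rightarrow> complex" where
  "fourier_power_coeff b k = fourier_coeff_complex (\<lambda>x. fourier_series b x ^ k)"

lemma set_integrable_fourier_series_power:
  assumes "abs_summable_int b"
  shows "set_integrable lborel {0..2*pi} (\<lambda>x. fourier_series b x ^ k)"
  by (rule set_integrable_bounded[where B="l1_norm_int b ^ k"])
     (use norm_fourier_series_le[OF assms] in \<open>auto simp: set_borel_measurable_def norm_power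
       intro!: power_mono\<close>)

lemma fourier_power_coeff_1: "abs_summable_int b \<Longrightarrow> fourier_power_coeff b 1 = b"
  by (simp add: fun_eq_iff fourier_power_coeff_def fourier_coeff_complex_fourier_series)

lemma fourier_power_coeff_Suc_sums:
  assumes "abs_summable_int b"
  shows "(\<lambda>j. b (int_decode j) * fourier_power_coeff b k (n - int_decode j))
    sums fourier_power_coeff b (Suc k) n"
  using fourier_coeff_complex_mult_fourier_series(2)
      [OF set_integrable_fourier_series_power[OF assms, of k] assms]
  by (simp add: fourier_power_coeff_def mult.commute)

section \<open>Uniqueness of Fourier coefficients\<close>

inductive trig_poly :: "(real \<Rightarrow> complex) \<Rightarrow> bool" where
  monomial: "trig_poly (\<lambda>x. c * exp (\<i> * of_int k * of_real x))"
| add: "trig_poly P \<Longrightarrow> trig_poly Q \<Longrightarrow> trig_poly (\<lambda>x. P x + Q x)"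

lemma trig_poly_const: "trig_poly (\<lambda>x. c)"
  using trig_poly.monomial[of c 0] by simp

lemma trig_poly_mult: "trig_poly P \<Longrightarrow> trig_poly Q \<Longrightarrow> trig_poly (\<lambda>x. P x * Q x)"
proof (induction P rule: trig_poly.induct)
  case (monomial c k)
  from monomial show ?case
  proof (induction Q rule: trig_poly.induct)
    case (monomial d j)
    have "(\<lambda>x. c * exp (\<i> * of_int k * of_real x) * (d * exp (\<i> * of_int j * of_real x))) =
          (\<lambda>x. (c * d) * exp (\<i> * of_int (k + j) * of_real x))"
      by (simp add: exp_add[symmetric] algebra_simps)
    then show ?case using trig_poly.monomial by metis
  next
    case (add P Q)
    then show ?case by (simp add: distrib_left trig_poly.add)
  qed
next
  case (add P1 P2)
  then show ?case by (simp add: distrib_right trig_poly.add)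
qed

lemma trig_poly_real_linear:
  assumes "bounded_linear (h :: complex \<Rightarrow> real)"
  shows "trig_poly (\<lambda>x. complex_of_real (h (exp (\<i> * of_real x))))"
proof -
  interpret bounded_linear h by fact
  have h: "h z = Re z * h 1 + Im z * h \<i>" for z
  proof -
    have "z = Re z *\<^sub>R 1 + Im z *\<^sub>R \<i>" by (simp add: complex_eq_iff)
    then have "h z = h (Re z *\<^sub>R 1 + Im z *\<^sub>R \<i>)" by (rule arg_cong)
    then show ?thesis by (simp add: add scale)
  qed
  have "complex_of_real (h (exp (\<i> * of_real x))) =
          ((h 1 - \<i> * h \<i>) / 2) * exp (\<i> * of_int 1 * of_real x) +
          ((h 1 + \<i> * h \<i>) / 2) * exp (\<i> * of_int (-1) * of_real x)" for x
    using h[of "exp (\<i> * of_real x)"] exp_cnj[of "\<i> * of_real x"]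
    by (simp add: complex_eq_iff Re_exp Im_exp algebra_simps; simp add: field_simps)
  then show ?thesis by (simp only: trig_poly.add trig_poly.monomial)
qed

lemma trig_poly_real_polynomial_function:
  "real_polynomial_function h \<Longrightarrow> trig_poly (\<lambda>x. complex_of_real (h (exp (\<i> * of_real x))))"
  by (induction h rule: real_polynomial_function.induct)
     (simp_all add: trig_poly_real_linear trig_poly_const trig_poly.add trig_poly_mult)

lemma trig_poly_polynomial_function:
  assumes "polynomial_function p"
  shows "trig_poly (\<lambda>x. p (exp (\<i> * of_real x)))"
proof -
  have "real_polynomial_function (Re \<circ> p)" "real_polynomial_function (Im \<circ> p)"
    using assms unfolding polynomial_function_def
      by (auto intro: bounded_linear_Re bounded_linear_Im)
  then have "trig_poly (\<lambda>x. complex_of_real (Re (p (exp (\<i> * of_real x)))) +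
                             \<i> * complex_of_real (Im (p (exp (\<i> * of_real x)))))"
    by (intro trig_poly.add trig_poly_mult[OF trig_poly_const])
       (auto dest: trig_poly_real_polynomial_function simp: o_def)
  moreover have "(\<lambda>x. complex_of_real (Re (p (exp (\<i> * of_real x)))) +
                      \<i> * complex_of_real (Im (p (exp (\<i> * of_real x)))))
                        = (\<lambda>x. p (exp (\<i> * of_real x)))"
    by (simp add: fun_eq_iff complex_eq_iff)
  ultimately show ?thesis by simp
qed

lemma set_integral_mult_trig_poly_eq_0:
  assumes w: "set_integrable lborel {0..2*pi} w" and zero: "\<And>n. fourier_coeff_complex w n = 0"
  shows "trig_poly P \<Longrightarrow> set_integrable lborel {0..2*pi} (\<lambda>x. w x * P x) \<and>
           (LINT x:{0..2*pi}|lborel. w x * P x) = 0"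
proof (induction P rule: trig_poly.induct)
  case (monomial c k)
  have "(\<lambda>x. w x * (c * exp (\<i> * of_int k * of_real x))) =
        (\<lambda>x. c * (w x * exp (- \<i> * of_int (- k) * of_real x)))"
    by (simp add: fun_eq_iff)
  moreover have "(LINT x:{0..2*pi}|lborel. w x * exp (- \<i> * of_int (- k) * of_real x)) = 0"
    using zero[of "- k"] by (simp only: set_integral_eq_fourier_coeff_complex) simp
  ultimately show ?case
    using set_integrable_mult_exp[OF w, of "- k"] by simp
next
  case (add P Q)
  then show ?case by (simp add: distrib_left)
qed

lemma set_integrable_mult_continuous_circle:
  fixes \<phi> :: "complex \<Rightarrow> complex"
  assumes w: "set_integrable lborel {0..2*pi} w" and \<phi>: "continuous_on (sphere 0 1) \<phi>"
  shows "set_integrable lborel {0..2*pi} (\<lambda>x. w x * \<phi> (exp (\<i> * of_real x)))"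
proof -
  have "continuous_on UNIV (\<lambda>x::real. exp (\<i> * of_real x))"
    by (intro continuous_intros)
  then have "continuous_on UNIV (\<lambda>x::real. \<phi> (exp (\<i> * of_real x)))"
    by (rule continuous_on_compose2[OF \<phi>]) auto
  then have meas: "(\<lambda>x. \<phi> (exp (\<i> * of_real x))) \<in> borel_measurable borel"
    by (rule borel_measurable_continuous_onI)
  obtain B where "\<And>z. z \<in> sphere 0 1 \<Longrightarrow> norm (\<phi> z) \<le> B"
    using compact_imp_bounded[OF compact_continuous_image[OF \<phi> compact_sphere]]
    unfolding bounded_iff by blast
  then show ?thesis
    by (intro set_integrable_mult_bounded[OF w meas, of B]) simp
qed

text \<open>Stone--Weierstrass on the unit circle: continuous functions of \<open>e\<^sup>i\<^sup>x\<close> are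
  uniform limits of trigonometric polynomials.\<close>

lemma set_integral_mult_continuous_eq_0:
  fixes \<phi> :: "complex \<Rightarrow> complex"
  assumes w: "set_integrable lborel {0..2*pi} w" and zero: "\<And>n. fourier_coeff_complex w n = 0"
    and \<phi>: "continuous_on (sphere 0 1) \<phi>"
  shows "(LINT x:{0..2*pi}|lborel. w x * \<phi> (exp (\<i> * of_real x))) = 0"
proof -
  define E where "E x = exp (\<i> * complex_of_real x)" for x :: real
  have E_sphere: "E x \<in> sphere 0 1" for x
    by (simp add: E_def)
  note wphi = set_integrable_mult_continuous_circle[OF w \<phi>, folded E_def]
  define C where "C = (LINT x:{0..2*pi}|lborel. norm (w x))"
  have C_nonneg: "C \<ge> 0"
    unfolding C_def set_lebesgue_integral_def by (intro Bochner_Integration.integral_nonneg) simp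
  have "norm (LINT x:{0..2*pi}|lborel. w x * \<phi> (E x)) \<le> e" if "e > 0" for e
  proof -
    obtain p where p: "polynomial_function p"
      and p_approx: "\<And>z. z \<in> sphere 0 1 \<Longrightarrow> norm (\<phi> z - p z) < e / (C + 1)"
      using Stone_Weierstrass_polynomial_function[OF compact_sphere \<phi>, of "e / (C + 1)"]
        \<open>e > 0\<close> C_nonneg by auto
    note wp = set_integral_mult_trig_poly_eq_0[OF w zero trig_poly_polynomial_function[OF p],
      folded E_def]
    have diff: "set_integrable lborel {0..2*pi} (\<lambda>x. w x * (\<phi> (E x) - p (E x)))"
      using set_integral_diff(1)[OF wphi conjunct1[OF wp]] by (simp add: right_diff_distrib)
    have "(LINT x:{0..2*pi}|lborel. w x * \<phi> (E x)) =
            (LINT x:{0..2*pi}|lborel. w x * (\<phi> (E x) - p (E x)))"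
      using set_integral_diff(2)[OF wphi conjunct1[OF wp]] conjunct2[OF wp]
      by (simp add: right_diff_distrib)
    also have "norm \<dots> \<le> (LINT x:{0..2*pi}|lborel. norm (w x * (\<phi> (E x) - p (E x))))"
      by (rule set_integral_norm_bound[OF diff])
    also have "\<dots> \<le> (LINT x:{0..2*pi}|lborel. e / (C + 1) * norm (w x))"
    proof (rule set_integral_mono)
      show "set_integrable lborel {0..2*pi} (\<lambda>x. norm (w x * (\<phi> (E x) - p (E x))))"
        using diff by (rule set_integrable_norm)
      show "set_integrable lborel {0..2*pi} (\<lambda>x. e / (C + 1) * norm (w x))"
        using set_integrable_norm[OF w] by (rule set_integrable_mult_right)
      show "norm (w x * (\<phi> (E x) - p (E x))) \<le> e / (C + 1) * norm (w x)" for x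
        using mult_left_mono[OF less_imp_le[OF p_approx[OF E_sphere[of x]]] norm_ge_zero[of "w x"]]
        by (simp add: norm_mult ac_simps)
    qed
    also have "\<dots> = e * (C / (C + 1))"
      by (simp add: C_def)
    also have "\<dots> \<le> e"
      using \<open>e > 0\<close> C_nonneg by (intro mult_left_le) auto
    finally show ?thesis .
  qed
  then show ?thesis
    using field_le_epsilon[of "norm (LINT x:{0..2*pi}|lborel. w x * \<phi> (E x))" 0]
    by (simp add: E_def)
qed

lemma exp_i_inj_on_period:
  assumes "y \<in> {0<..<2*pi}" "t \<in> {0..2*pi}" "exp (\<i> * complex_of_real y)
    = exp (\<i> * complex_of_real t)"
  shows "y = t"
proof -
  have Arg_y: "Arg2pi (exp (\<i> * complex_of_real y)) = y"
    by (rule Arg2pi_unique[of 1]) (use assms(1) in auto)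
  show ?thesis
  proof (cases "t = 2*pi")
    case True
    then have "exp (\<i> * complex_of_real t) = 1"
      using exp_integer_2pi[of 1] by (simp add: mult.commute)
    moreover have "Arg2pi 1 = 0" by (rule Arg2pi_unique[of 1 0]) auto
    ultimately have "Arg2pi (exp (\<i> * complex_of_real y)) = 0" using assms(3) by simp
    then show ?thesis using Arg_y assms(1) by simp
  next
    case False
    have "Arg2pi (exp (\<i> * complex_of_real t)) = t"
      by (rule Arg2pi_unique[of 1]) (use assms(2) False in auto)
    then show ?thesis using Arg_y assms(3) by simp
  qed
qed

lemma tendsto_cutoff_exp_i_indicator:
  fixes a b y :: real
  defines "A \<equiv> (\<lambda>t. exp (\<i> * complex_of_real t)) ` {a..b}"
  assumes ab: "0 \<le> a" "a \<le> b" "b \<le> 2*pi" and y: "y \<in> {0<..<2*pi}"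
  shows "(\<lambda>j. max 0 (1 - real j * infdist (exp (\<i> * complex_of_real y)) A)) \<longlonglongrightarrow> indicator {a..b} y"
proof -
  have "closed A"
    unfolding A_def by (intro compact_imp_closed compact_continuous_image continuous_intros) auto
  have "A \<noteq> {}"
    using ab by (auto simp: A_def)
  have "exp (\<i> * complex_of_real y) \<in> A \<longleftrightarrow> y \<in> {a..b}"
  proof
    assume "exp (\<i> * complex_of_real y) \<in> A"
    then obtain t where t: "t \<in> {a..b}" "exp (\<i> * complex_of_real y) = exp (\<i> * complex_of_real t)"
      by (auto simp: A_def)
    then have "y = t"
      using exp_i_inj_on_period[OF y, of t] ab by simp
    with t show "y \<in> {a..b}" by simp
  qed (simp add: A_def)
  then show ?thesis
    using tendsto_infdist_cutoff_indicator[OF \<open>closed A\<close> \<open>A \<noteq> {}\<close>, of "exp (\<i> * complex_of_real y)"]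
    by (simp add: indicator_def)
qed

text \<open>The indicator of \<open>[a, b]\<close> is, off the endpoints \<open>0, 2\<pi>\<close>, the pointwise limit of
  continuous functions of \<open>e\<^sup>i\<^sup>x\<close>; dominated convergence.\<close>

lemma set_integral_interval_eq_0:
  fixes w :: "real \<Rightarrow> complex"
  assumes w: "set_integrable lborel {0..2*pi} w" and zero: "\<And>n. fourier_coeff_complex w n = 0"
    and ab: "0 \<le> a" "a \<le> b" "b \<le> 2*pi"
  shows "(LINT x:{a..b}|lborel. w x) = 0"
proof -
  define E where "E x = exp (\<i> * complex_of_real x)" for x :: real
  define \<phi> where "\<phi> j z = complex_of_real (max 0 (1 - real j * infdist z (E ` {a..b})))"
    for j :: nat and z
  define s where "s j y = indicat_real {0..2*pi} y *\<^sub>R (w y * \<phi> j (E y))" for j y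
  have \<phi>_cont: "continuous_on (sphere 0 1) (\<phi> j)" for j
    unfolding \<phi>_def by (intro continuous_intros continuous_on_infdist)
  have "(\<lambda>j. integral\<^sup>L lborel (s j)) \<longlonglongrightarrow> (LINT x:{a..b}|lborel. w x)"
    unfolding set_lebesgue_integral_def
  proof (rule integral_dominated_convergence)
    have w_meas: "(\<lambda>y. indicat_real {0..2*pi} y *\<^sub>R w y) \<in> borel_measurable lborel"
      using w unfolding set_integrable_def by (rule borel_measurable_integrable)
    have eq: "(\<lambda>y. indicat_real {a..b} y *\<^sub>R w y) =
            (\<lambda>y. indicat_real {a..b} y *\<^sub>R (indicat_real {0..2*pi} y *\<^sub>R w y))"
      using ab by (auto simp: fun_eq_iff indicator_def)
    show "(\<lambda>y. indicat_real {a..b} y *\<^sub>R w y) \<in> borel_measurable lborel"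
      unfolding eq by (intro borel_measurable_scaleR w_meas) simp
    show "s j \<in> borel_measurable lborel" for j
      using set_integrable_mult_continuous_circle[OF w \<phi>_cont, folded E_def]
      unfolding s_def set_integrable_def by (rule borel_measurable_integrable)
    show "integrable lborel (\<lambda>y. norm (indicat_real {0..2*pi} y *\<^sub>R w y))"
      using w unfolding set_integrable_def by (rule integrable_norm)
    show "AE y in lborel. norm (s j y) \<le> norm (indicat_real {0..2*pi} y *\<^sub>R w y)" for j
    proof (rule AE_I2)
      fix y
      have "norm (\<phi> j z) \<le> 1" for z
        using infdist_nonneg[of z "E ` {a..b}"] by (simp add: \<phi>_def)
      from mult_left_le[OF this norm_ge_zero[of "w y"]]
      show "norm (s j y) \<le> norm (indicat_real {0..2*pi} y *\<^sub>R w y)"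
        by (simp add: s_def norm_mult indicator_def)
    qed
    show "AE y in lborel. (\<lambda>j. s j y) \<longlonglongrightarrow> indicat_real {a..b} y *\<^sub>R w y"
      using AE_lborel_singleton[of 0] AE_lborel_singleton[of "2*pi"]
    proof eventually_elim
      case (elim y)
      show ?case
      proof (cases "y \<in> {0<..<2*pi}")
        case True
        have "(\<lambda>j. w y * \<phi> j (E y)) \<longlonglongrightarrow> w y * complex_of_real (indicator {a..b} y)"
          unfolding \<phi>_def E_def[abs_def]
          by (intro tendsto_intros tendsto_cutoff_exp_i_indicator ab True)
        then show ?thesis
          using True by (cases "y \<in> {a..b}") (simp_all add: s_def)
      next
        case False
        with elim ab have "y \<notin> {0..2*pi}" "y \<notin> {a..b}"
          by auto
        then show ?thesis by (simp add: s_def)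
      qed
    qed
  qed
  moreover have "integral\<^sup>L lborel (s j) = 0" for j
    using set_integral_mult_continuous_eq_0[OF w zero \<phi>_cont, folded E_def]
    by (simp add: s_def[abs_def] set_lebesgue_integral_def)
  ultimately have "(\<lambda>j. 0) \<longlonglongrightarrow> (LINT x:{a..b}|lborel. w x)"
    by simp
  then show ?thesis
    by (simp add: LIMSEQ_const_iff)
qed

lemma AE_Re_eq_0_if_fourier_coeff_complex_eq_0:
  fixes w :: "real \<Rightarrow> complex"
  assumes w: "set_integrable lborel {0..2*pi} w" and zero: "\<And>n. fourier_coeff_complex w n = 0"
  shows "AE x in lborel. x \<in> {0..2*pi} \<longrightarrow> Re (w x) = 0"
proof -
  define u where "u = (\<lambda>y. indicator {0..2*pi} y * Re (w y))"
  have u: "integrable lborel u"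
    using integrable_Re[OF w[unfolded set_integrable_def]] by (simp add: u_def)
  have "(LINT y:{x<..}|lborel. u y) = 0" for x
  proof -
    define a where "a = min (max x 0) (2*pi)"
    have a: "0 \<le> a" "a \<le> 2*pi" by (auto simp: a_def)
    have wa: "set_integrable lborel {a..2*pi} w"
      by (rule set_integrable_subset[OF w]) (use a in auto)
    have "(LINT y:{x<..}|lborel. u y) = (LINT y|lborel. Re (indicat_real {a..2*pi} y *\<^sub>R w y))"
      unfolding set_lebesgue_integral_def
    proof (rule integral_cong_AE)
      show "(\<lambda>y. indicat_real {x<..} y *\<^sub>R u y) \<in> borel_measurable lborel"
        by (intro borel_measurable_integrable integrable_mult_indicator u) simp
      show "(\<lambda>y. Re (indicat_real {a..2*pi} y *\<^sub>R w y)) \<in> borel_measurable lborel"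
        using wa unfolding set_integrable_def by (intro borel_measurable_integrable integrable_Re)
      show "AE y in lborel. indicat_real {x<..} y *\<^sub>R u y = Re (indicat_real {a..2*pi} y *\<^sub>R w y)"
        using AE_lborel_singleton[of a]
      proof eventually_elim
        case (elim y)
        then have "(x < y \<and> 0 \<le> y \<and> y \<le> 2*pi) \<longleftrightarrow> (a \<le> y \<and> y \<le> 2*pi)"
          by (auto simp: a_def min_def max_def split: if_splits)
        then show ?case by (auto simp: u_def indicator_def)
      qed
    qed
    also have "\<dots> = Re (LINT y:{a..2*pi}|lborel. w y)"
      using integral_Re[OF wa[unfolded set_integrable_def]] by (simp add: set_lebesgue_integral_def)
    also have "\<dots> = 0"
      using set_integral_interval_eq_0[OF w zero a order_refl] by simp
    finally show ?thesis .
  qed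
  then have "AE y in lborel. u y = 0"
    by (rule AE_eq_0_if_set_integral_Ioi_eq_0[OF u])
  then show ?thesis
    by eventually_elim (auto simp: u_def)
qed

lemma AE_eq_0_if_fourier_coeff_complex_eq_0:
  fixes w :: "real \<Rightarrow> complex"
  assumes w: "set_integrable lborel {0..2*pi} w" and zero: "\<And>n. fourier_coeff_complex w n = 0"
  shows "AE x in lborel. x \<in> {0..2*pi} \<longrightarrow> w x = 0"
proof -
  have "AE x in lborel. x \<in> {0..2*pi} \<longrightarrow> Re (w x) = 0"
    by (rule AE_Re_eq_0_if_fourier_coeff_complex_eq_0[OF w zero])
  moreover have "AE x in lborel. x \<in> {0..2*pi} \<longrightarrow> Re (- \<i> * w x) = 0"
  proof (rule AE_Re_eq_0_if_fourier_coeff_complex_eq_0)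
    show "set_integrable lborel {0..2*pi} (\<lambda>x. - \<i> * w x)"
      using w by (rule set_integrable_mult_right)
    show "fourier_coeff_complex (\<lambda>x. - \<i> * w x) n = 0" for n
      using zero[of n] by (simp only: fourier_coeff_complex_cmult[of "- \<i>"]) simp
  qed
  ultimately show ?thesis
    by eventually_elim (auto simp: complex_eq_iff)
qed

lemma AE_eq_fourier_series:
  assumes f: "in_L1_torus f" and b: "abs_summable_int (fourier_coeff f)"
  shows "AE x in lborel. x \<in> {0..2*pi} \<longrightarrow> complex_of_real (f x) = fourier_series (fourier_coeff f) x"
proof -
  have F: "set_integrable lborel {0..2*pi} (\<lambda>x. complex_of_real (f x))"
    using integrable_of_real[OF f[unfolded in_L1_torus_def set_integrable_def]]
    by (simp add: set_integrable_def scaleR_conv_of_real)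
  have S: "set_integrable lborel {0..2*pi} (fourier_series (fourier_coeff f))"
    using set_integrable_fourier_series_power[OF b, of 1] by simp
  have "fourier_coeff_complex (\<lambda>x. complex_of_real (f x) - fourier_series (fourier_coeff f) x) n
    = 0" for n
    using fourier_coeff_complex_diff[OF F S, of n] fourier_coeff_complex_fourier_series[OF b, of n]
    by (simp add: fourier_coeff_eq_complex)
  from AE_eq_0_if_fourier_coeff_complex_eq_0[OF set_integral_diff(1)[OF F S] this]
  show ?thesis by simp
qed

section \<open>Weighted \<open>\<ell>\<^sup>1\<close> norms on \<open>\<int>\<close>\<close>

definition wiener_weight :: "real \<Rightarrow> real \<Rightarrow> int \<Rightarrow> real" where
  "wiener_weight s lam n = (1 + real_of_int \<bar>n\<bar>) powr s * exp (lam * real_of_int \<bar>n\<bar>)"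

definition weighted_l1_norm :: "real \<Rightarrow> real \<Rightarrow> (int \<Rightarrow> complex) \<Rightarrow> ennreal" where
  "weighted_l1_norm s lam b =
     (\<integral>\<^sup>+ n. ennreal (wiener_weight s lam n * cmod (b n)) \<partial>count_space UNIV)"

lemma wiener_norm_eq_weighted_l1_norm: "wiener_norm s lam f
  = weighted_l1_norm s lam (fourier_coeff f)"
  by (simp add: wiener_norm_def weighted_l1_norm_def wiener_weight_def)

lemma wiener_weight_pos: "wiener_weight s lam n > 0"
  by (simp add: wiener_weight_def)

lemma wiener_weight_0: "wiener_weight 0 lam n = exp (lam * real_of_int \<bar>n\<bar>)"
  by (simp add: wiener_weight_def)

lemma abs_summable_if_weighted_l1_norm_finite:
  assumes "lam \<ge> 0" and fin: "weighted_l1_norm 0 lam b < \<infinity>"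
  shows "abs_summable_int b" and "ennreal (l1_norm_int b) \<le> weighted_l1_norm 0 lam b"
proof -
  have "norm (b m) \<le> wiener_weight 0 lam m * norm (b m)" for m
    using mult_right_mono[of 1 "wiener_weight 0 lam m" "norm (b m)"] \<open>lam \<ge> 0\<close>
    by (simp add: wiener_weight_0)
  then have le: "(\<Sum>k. ennreal (norm (b (int_decode k)))) \<le> weighted_l1_norm 0 lam b"
    unfolding weighted_l1_norm_def nn_integral_int_eq_suminf
    by (intro suminf_le summableI ennreal_leI)
  then have "(\<Sum>k. ennreal (norm (b (int_decode k)))) \<noteq> \<infinity>"
    using le_less_trans[OF le fin] by (simp add: less_top)
  then show summable: "abs_summable_int b"
    by (intro summable_suminf_not_top) simp_all
  show "ennreal (l1_norm_int b) \<le> weighted_l1_norm 0 lam b"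
    using le suminf_ennreal2[OF norm_ge_zero summable] by simp
qed

lemma K_const_pos: "K_const s > 0"
  by (simp add: K_const_def)

lemma K_const_0: "K_const 0 = 1/2"
  by (simp add: K_const_def powr_minus)

lemma K_const_ge_1: "s > 0 \<Longrightarrow> K_const s \<ge> 1"
  by (simp add: K_const_def ge_one_powr_ge_zero)

lemma K_const_ge_half: "s \<ge> 0 \<Longrightarrow> K_const s \<ge> 1/2"
  using K_const_0 K_const_ge_1[of s] by (cases "s = 0") auto

text \<open>Concavity of \<open>t\<^sup>s\<close> for \<open>s \<le> 1\<close>, convexity for \<open>s \<ge> 1\<close>.\<close>

lemma powr_add_le_K_const:
  fixes x y s :: real
  assumes x: "x > 0" and y: "y > 0" and s: "s \<ge> 0"
  shows "(x + y) powr s \<le> K_const s * (x powr s + y powr s)"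
proof (cases "0 < s \<and> s \<le> 1")
  case True
  then have K: "K_const s = 1" by (simp add: K_const_def)
  define t where "t = x / (x + y)"
  have t: "0 \<le> t" "t \<le> 1" "0 \<le> 1 - t" "1 - t \<le> 1" using x y by (auto simp: t_def)
  have tx: "t * (x + y) = x" "(1 - t) * (x + y) = y"
    using x y by (simp_all add: t_def field_simps)
  have "t powr 1 \<le> t powr s" "(1 - t) powr 1 \<le> (1 - t) powr s"
    by (rule powr_mono'; use True t in simp)+
  then have "1 \<le> t powr s + (1 - t) powr s"
    using t by simp
  from mult_right_mono[OF this, of "(x + y) powr s"]
  have "(x + y) powr s \<le> (t powr s + (1 - t) powr s) * (x + y) powr s"
    by simp
  also have "\<dots> = (t * (x + y)) powr s + ((1 - t) * (x + y)) powr s"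
    using t x y by (simp add: powr_mult distrib_right)
  also have "\<dots> = x powr s + y powr s"
    by (simp only: tx)
  finally show ?thesis by (simp add: K)
next
  case False
  then have K: "K_const s = 2 powr (s - 1)" by (simp only: K_const_def if_False)
  show ?thesis
  proof (cases "s = 0")
    case True
    then show ?thesis using x y by (simp add: K_const_0)
  next
    case False
    then have "1 \<le> s" using \<open>\<not> (0 < s \<and> s \<le> 1)\<close> s by simp
    have "((1 - 1/2) *\<^sub>R x + (1/2) *\<^sub>R y) powr s \<le> (1 - 1/2) * x powr s + (1/2) * y powr s"
      by (rule convex_onD[OF powr_convex[OF \<open>1 \<le> s\<close>]]) (use x y in auto)
    then have "((x + y) / 2) powr s \<le> (x powr s + y powr s) / 2"
      by (simp add: add_divide_distrib)
    from mult_left_mono[OF this, of "2 powr s"]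
    show ?thesis
      using x y by (simp add: K powr_divide powr_diff)
  qed
qed

lemma wiener_weight_le:
  assumes "s \<ge> 0" "lam \<ge> 0"
  shows "wiener_weight s lam n \<le> K_const s *
           (wiener_weight s lam m * wiener_weight 0 lam (n - m) + wiener_weight 0 lam m
             * wiener_weight s lam (n - m))"
proof -
  define x where "x = 1 + real_of_int \<bar>m\<bar>"
  define y where "y = 1 + real_of_int \<bar>n - m\<bar>"
  have "(1 + real_of_int \<bar>n\<bar>) powr s \<le> (x + y) powr s"
    using assms by (intro powr_mono2) (auto simp: x_def y_def)
  also have "\<dots> \<le> K_const s * (x powr s + y powr s)"
    using assms by (intro powr_add_le_K_const) (auto simp: x_def y_def)
  finally have poly: "(1 + real_of_int \<bar>n\<bar>) powr s \<le> K_const s * (x powr s + y powr s)" .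
  have "lam * real_of_int \<bar>n\<bar> \<le> lam * real_of_int \<bar>m\<bar> + lam * real_of_int \<bar>n - m\<bar>"
    using assms by (simp add: distrib_left[symmetric] mult_left_mono)
  then have expo: "exp (lam * real_of_int \<bar>n\<bar>) \<le> exp (lam * real_of_int \<bar>m\<bar>)
    * exp (lam * real_of_int \<bar>n - m\<bar>)"
    by (simp add: exp_add[symmetric])
  have "wiener_weight s lam n \<le>
          K_const s * (x powr s + y powr s) *
            (exp (lam * real_of_int \<bar>m\<bar>) * exp (lam * real_of_int \<bar>n - m\<bar>))"
    unfolding wiener_weight_def
    by (rule mult_mono[OF poly expo]) (use K_const_pos[of s] in \<open>auto simp: x_def y_def\<close>)
  then show ?thesis
    by (simp only: wiener_weight_0) (simp add: wiener_weight_def x_def y_def algebra_simps)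
qed

lemma ennreal_wiener_weight_mult_le:
  assumes "s \<ge> 0" "lam \<ge> 0" "x \<ge> 0" "y \<ge> 0"
  shows "ennreal (wiener_weight s lam n * (x * y)) \<le> ennreal (K_const s) *
           (ennreal (wiener_weight s lam m * x) * ennreal (wiener_weight 0 lam (n - m) * y) +
            ennreal (wiener_weight 0 lam m * x) * ennreal (wiener_weight s lam (n - m) * y))"
proof -
  have W: "0 \<le> wiener_weight t lam k" for t k
    using wiener_weight_pos[of t lam k] by simp
  have "wiener_weight s lam n * (x * y) \<le>
          K_const s * ((wiener_weight s lam m * x) * (wiener_weight 0 lam (n - m) * y) +
                       (wiener_weight 0 lam m * x) * (wiener_weight s lam (n - m) * y))"
    using mult_right_mono[OF wiener_weight_le[OF assms(1,2), of n m], of "x * y"] assms(3,4)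
    by (simp add: algebra_simps)
  from ennreal_leI[OF this] show ?thesis
    using K_const_pos[of s] W assms(3,4) by (simp add: ennreal_mult)
qed

text \<open>No summability hypothesis is needed: in \<open>ennreal\<close> a divergent right-hand
  side is \<open>\<infinity>\<close>.\<close>

lemma weighted_l1_norm_convolution_le:
  fixes b c d :: "int \<Rightarrow> complex"
  assumes "s \<ge> 0" "lam \<ge> 0"
    and d: "\<And>n. (\<lambda>k. b (int_decode k) * c (n - int_decode k)) sums d n"
  shows "weighted_l1_norm s lam d \<le> ennreal (K_const s) *
           (weighted_l1_norm s lam b * weighted_l1_norm 0 lam c +
            weighted_l1_norm 0 lam b * weighted_l1_norm s lam c)"
proof -
  define B where "B t m = ennreal (wiener_weight t lam m * cmod (b m))" for t m
  define C where "C t m = ennreal (wiener_weight t lam m * cmod (c m))" for t m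
  have norm_B: "weighted_l1_norm t lam b = (\<integral>\<^sup>+ m. B t m \<partial>count_space UNIV)" for t
    by (simp add: weighted_l1_norm_def B_def)
  have norm_C: "weighted_l1_norm t lam c = (\<integral>\<^sup>+ n. C t (n - m) \<partial>count_space UNIV)" for t m
    using nn_integral_int_shift[of "C t" m] by (simp add: weighted_l1_norm_def C_def)
  have W: "0 \<le> wiener_weight t lam k" for t k
    using wiener_weight_pos[of t lam k] by simp
  have weight: "ennreal (wiener_weight s lam n * (cmod (b m) * cmod (c (n - m)))) \<le>
                  ennreal (K_const s) * (B s m * C 0 (n - m) + B 0 m * C s (n - m))" for n m
    unfolding B_def C_def by (rule ennreal_wiener_weight_mult_le[OF assms(1,2) norm_ge_zero norm_ge_zero])
  have pointwise: "ennreal (wiener_weight s lam n * cmod (d n)) \<le>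
      (\<integral>\<^sup>+ m. ennreal (K_const s) * (B s m * C 0 (n - m) + B 0 m * C s (n - m)) \<partial>count_space UNIV)"
    for n
  proof -
    have "ennreal (wiener_weight s lam n * cmod (d n)) \<le>
            ennreal (wiener_weight s lam n) *
              (\<integral>\<^sup>+ m. ennreal (cmod (b m) * cmod (c (n - m))) \<partial>count_space UNIV)"
      using mult_left_mono[OF ennreal_norm_le_suminf_norm[OF d[of n]],
          of "ennreal (wiener_weight s lam n)"]
      by (simp add: W ennreal_mult nn_integral_int_eq_suminf norm_mult)
    also have "\<dots> = (\<integral>\<^sup>+ m. ennreal (wiener_weight s lam n * (cmod (b m) * cmod (c (n - m))))
      \<partial>count_space UNIV)"
      by (simp add: W ennreal_mult nn_integral_cmult)
    also have "\<dots> \<le> (\<integral>\<^sup>+ m. ennreal (K_const s)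
      * (B s m * C 0 (n - m) + B 0 m * C s (n - m)) \<partial>count_space UNIV)"
      by (intro nn_integral_mono weight)
    finally show ?thesis .
  qed
  have "weighted_l1_norm s lam d \<le>
          (\<integral>\<^sup>+ n. \<integral>\<^sup>+ m. ennreal (K_const s) * (B s m * C 0 (n - m) + B 0 m * C s (n - m))
             \<partial>count_space UNIV \<partial>count_space UNIV)"
    unfolding weighted_l1_norm_def by (intro nn_integral_mono pointwise)
  also have "\<dots> = (\<integral>\<^sup>+ m. \<integral>\<^sup>+ n. ennreal (K_const s) * (B s m * C 0 (n - m) + B 0 m * C s (n - m))
             \<partial>count_space UNIV \<partial>count_space UNIV)"
    by (rule nn_integral_count_space_nn_integral) simp_all
  also have "\<dots> = (\<integral>\<^sup>+ m. ennreal (K_const s) *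
    (B s m * weighted_l1_norm 0 lam c + B 0 m * weighted_l1_norm s lam c)
             \<partial>count_space UNIV)"
    by (simp add: nn_integral_cmult nn_integral_add flip: norm_C)
  also have "\<dots> = ennreal (K_const s) *
           (weighted_l1_norm s lam b * weighted_l1_norm 0 lam c +
            weighted_l1_norm 0 lam b * weighted_l1_norm s lam c)"
    by (simp add: nn_integral_cmult nn_integral_add nn_integral_multc norm_B)
  finally show ?thesis .
qed

section \<open>The binomial series of \<open>G\<close>\<close>

definition G_coeff :: "nat \<Rightarrow> real" where
  "G_coeff k = (if k = 0 then 0 else (- (3/2)) gchoose k)"

lemma abs_G_coeff_le: "\<bar>G_coeff k\<bar> \<le> real k + 1"
proof -
  have "\<bar>(- (3/2::real)) gchoose k\<bar> \<le> real k + 1"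
  proof (induction k)
    case (Suc k)
    have "(real k + 1) * ((- (3/2::real)) gchoose Suc k) = (real k + 3/2) * - ((- (3/2)) gchoose k)"
      using gbinomial_mult_1[of "- (3/2::real)" k] by (simp add: algebra_simps)
    then have "\<bar>(real k + 1) * ((- (3/2::real)) gchoose Suc k)\<bar> = \<bar>(real k + 3/2)
      * - ((- (3/2)) gchoose k)\<bar>"
      by (rule arg_cong)
    then have "(real k + 1) * \<bar>(- (3/2::real)) gchoose Suc k\<bar> = (real k + 3/2)
      * \<bar>(- (3/2)) gchoose k\<bar>"
      by (simp only: abs_mult abs_minus_cancel)
    also have "\<dots> \<le> (real k + 1) * (real k + 3/2)"
      using mult_left_mono[OF Suc.IH, of "real k + 3/2"] by (simp add: mult.commute)
    finally have "\<bar>(- (3/2::real)) gchoose Suc k\<bar> \<le> real k + 3/2"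
      by (rule mult_left_le_imp_le) simp
    then show ?case by simp
  qed simp
  then show ?thesis by (simp add: G_coeff_def)
qed

lemma add_two_le_power_three_halves: "real k + 2 \<le> 2 * (3/2) ^ k"
  by (induction k) auto

lemma G_fun_sums:
  assumes "\<bar>x\<bar> < 1"
  shows "(\<lambda>k. G_coeff k * x ^ k) sums G_fun x"
proof -
  have "(\<lambda>k. ((- (3/2)) gchoose k) * x ^ k - (if k = 0 then 1 else 0))
    sums ((1 + x) powr (- (3/2)) - 1)"
    using sums_diff[OF gen_binomial_real[OF assms] sums_single[of 0 "\<lambda>_. 1::real"]] by simp
  moreover have "(\<lambda>k. ((- (3/2)) gchoose k) * x ^ k - (if k = 0 then 1 else 0))
    = (\<lambda>k. G_coeff k * x ^ k)"
    by (auto simp: fun_eq_iff G_coeff_def)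
  ultimately show ?thesis
    by (simp add: G_fun_def powr_minus_divide)
qed

lemma summable_G_coeff_majorant:
  assumes "0 \<le> r" "r \<le> 1/2"
  shows "summable (\<lambda>k. \<bar>G_coeff k\<bar> * r ^ k)"
proof (rule summable_comparison_test'[OF summable_mult[OF summable_geometric[of "3/4"], where c=2]])
  fix k
  have "norm (\<bar>G_coeff k\<bar> * r ^ k) \<le> (2 * (3/2) ^ k) * (1/2) ^ k"
    using abs_G_coeff_le[of k] add_two_le_power_three_halves[of k] assms
    by (simp, intro mult_mono power_mono) auto
  also have "\<dots> = 2 * (3/4) ^ k"
    unfolding mult.assoc power_mult_distrib[symmetric] by simp
  finally show "norm (\<bar>G_coeff k\<bar> * r ^ k) \<le> 2 * (3/4) ^ k" .
qed simp

lemma abs_G_fun_le: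
  assumes "\<bar>x\<bar> \<le> r" "r \<le> 1/2"
  shows "\<bar>G_fun x\<bar> \<le> (\<Sum>k. \<bar>G_coeff k\<bar> * r ^ k)"
proof -
  have le: "\<bar>G_coeff k * x ^ k\<bar> \<le> \<bar>G_coeff k\<bar> * r ^ k" for k
    using assms by (simp add: abs_mult power_abs mult_left_mono power_mono)
  have majorant: "summable (\<lambda>k. \<bar>G_coeff k\<bar> * r ^ k)"
    using assms by (intro summable_G_coeff_majorant) auto
  have summable: "summable (\<lambda>k. \<bar>G_coeff k * x ^ k\<bar>)"
    by (rule summable_comparison_test'[OF majorant]) (simp add: le)
  have "\<bar>G_fun x\<bar> = \<bar>\<Sum>k. G_coeff k * x ^ k\<bar>"
    using G_fun_sums[of x] assms by (simp add: sums_iff)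
  also have "\<dots> \<le> (\<Sum>k. \<bar>G_coeff k * x ^ k\<bar>)"
    by (rule summable_rabs[OF summable])
  also have "\<dots> \<le> (\<Sum>k. \<bar>G_coeff k\<bar> * r ^ k)"
    by (rule suminf_le[OF le summable majorant])
  finally show ?thesis .
qed

lemma G_fun_measurable [measurable]: "G_fun \<in> borel_measurable borel"
  unfolding G_fun_def[abs_def] by measurable

section \<open>Fourier coefficients of \<open>G \<circ> v\<close>\<close>

lemma G_fun_sums_fourier_series:
  assumes b: "abs_summable_int b" and r: "l1_norm_int b \<le> 1/2"
    and y: "complex_of_real y = fourier_series b x"
  shows "(\<lambda>k. complex_of_real (G_coeff k) * fourier_series b x ^ k) sums complex_of_real (G_fun y)"
proof -
  have "\<bar>y\<bar> \<le> l1_norm_int b"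
    using norm_fourier_series_le[OF b, of x] by (simp flip: y)
  with r have "\<bar>y\<bar> < 1" by simp
  from G_fun_sums[OF this, THEN sums_of_real] show ?thesis
    by (simp flip: y)
qed

lemma set_integrable_G_fun_comp:
  assumes v: "in_L1_torus v" and bound: "AE x in lborel. x \<in> {0..2*pi} \<longrightarrow> \<bar>v x\<bar> \<le> r"
    and r: "r \<le> 1/2"
  shows "in_L1_torus (\<lambda>x. G_fun (v x))"
  unfolding in_L1_torus_def
proof (rule set_integrable_bounded[where B="\<Sum>k. \<bar>G_coeff k\<bar> * r ^ k"])
  have "(\<lambda>x. indicat_real {0..2*pi} x * v x) \<in> borel_measurable lborel"
    using v by (simp add: in_L1_torus_def set_integrable_def borel_measurable_integrable)
  moreover have "(\<lambda>x. indicat_real {0..2*pi} x *\<^sub>R G_fun (v x))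
    = (\<lambda>x. G_fun (indicat_real {0..2*pi} x * v x))"
    by (auto simp: fun_eq_iff indicator_def G_fun_def)
  ultimately show "set_borel_measurable lborel {0..2*pi} (\<lambda>x. G_fun (v x))"
    unfolding set_borel_measurable_def by (simp add: measurable_compose[OF _ G_fun_measurable])
  show "AE x in lborel. x \<in> {0..2*pi} \<longrightarrow> norm (G_fun (v x)) \<le> (\<Sum>k. \<bar>G_coeff k\<bar> * r ^ k)"
    using bound by eventually_elim (use abs_G_fun_le r in auto)
qed auto

lemma fourier_coeff_G_fun_comp_sums:
  assumes G: "in_L1_torus (\<lambda>x. G_fun (v x))"
    and b: "abs_summable_int b" and r: "l1_norm_int b \<le> 1/2"
    and v: "AE x in lborel. x \<in> {0..2*pi} \<longrightarrow> complex_of_real (v x) = fourier_series b x"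
  shows "(\<lambda>k. complex_of_real (G_coeff k) * fourier_power_coeff b k n)
    sums fourier_coeff (\<lambda>x. G_fun (v x)) n"
proof -
  define e where "e x = exp (- \<i> * of_int n * of_real x)" for x :: real
  define f where "f k x = complex_of_real (G_coeff k) * (fourier_series b x ^ k * e x)" for k x
  have r_nonneg: "0 \<le> l1_norm_int b"
    using b by (intro suminf_nonneg) auto
  have meas: "set_borel_measurable lborel {0..2*pi} (f k)" for k
    unfolding set_borel_measurable_def f_def e_def by measurable
  have one: "set_integrable lborel {0..2*pi} (\<lambda>_. 1::real)"
    by (intro borel_integrable_atLeastAtMost' continuous_intros)
  have bound: "AE x in lborel. x \<in> {0..2*pi} \<longrightarrow>
                 norm (f k x) \<le> (\<bar>G_coeff k\<bar> * l1_norm_int b ^ k) * 1" for k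
    using norm_fourier_series_le[OF b]
    by (auto simp: f_def e_def norm_mult norm_power intro!: mult_left_mono power_mono)
  have c: "0 \<le> \<bar>G_coeff k\<bar> * l1_norm_int b ^ k" for k
    using r_nonneg by simp
  have integral_f: "(LINT x:{0..2*pi}|lborel. f k x) =
                      of_real (2*pi) * (of_real (G_coeff k) * fourier_power_coeff b k n)" for k
    unfolding f_def e_def set_integral_mult_right set_integral_eq_fourier_coeff_complex
      fourier_power_coeff_def
    by simp
  have GC: "set_integrable lborel {0..2*pi} (\<lambda>x. complex_of_real (G_fun (v x)))"
    using integrable_of_real[OF G[unfolded in_L1_torus_def set_integrable_def]]
    by (simp add: set_integrable_def scaleR_conv_of_real)
  have "(\<lambda>k. LINT x:{0..2*pi}|lborel. f k x) sums
          (LINT x:{0..2*pi}|lborel. complex_of_real (G_fun (v x)) * e x)"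
  proof (rule set_integral_sums_AE[OF meas one bound summable_G_coeff_majorant[OF r_nonneg r] c])
    show "set_borel_measurable lborel {0..2*pi} (\<lambda>x. complex_of_real (G_fun (v x)) * e x)"
      using set_integrable_mult_exp[OF GC, of n]
      unfolding set_integrable_def set_borel_measurable_def e_def
      by (rule borel_measurable_integrable)
    show "AE x in lborel. x \<in> {0..2*pi} \<longrightarrow>
            (\<lambda>k. f k x) sums (complex_of_real (G_fun (v x)) * e x)"
      using v
    proof eventually_elim
      case (elim x)
      show ?case
      proof
        assume "x \<in> {0..2*pi}"
        with elim have "complex_of_real (v x) = fourier_series b x"
          by simp
        from sums_mult2[OF G_fun_sums_fourier_series[OF b r this], of "e x"]
        show "(\<lambda>k. f k x) sums (complex_of_real (G_fun (v x)) * e x)"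
          by (simp add: f_def mult.assoc)
      qed
    qed
  qed
  moreover have "(LINT x:{0..2*pi}|lborel. complex_of_real (G_fun (v x)) * e x) =
                   of_real (2*pi) * fourier_coeff (\<lambda>x. G_fun (v x)) n"
    unfolding e_def set_integral_eq_fourier_coeff_complex fourier_coeff_eq_complex ..
  ultimately have "(\<lambda>k. of_real (2*pi) * (of_real (G_coeff k) * fourier_power_coeff b k n)) sums
                     (of_real (2*pi) * fourier_coeff (\<lambda>x. G_fun (v x)) n)"
    unfolding integral_f by simp
  from sums_mult[OF this, of "1 / (2*pi)"] show ?thesis
    by (simp add: field_simps)
qed

section \<open>Weighted norms of powers and of \<open>G \<circ> v\<close>\<close>

lemma weighted_l1_norm_sums_le:
  assumes "\<And>n. (\<lambda>k. complex_of_real (c k) * p k n) sums d n"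
  shows "weighted_l1_norm s lam d \<le> (\<Sum>k. ennreal \<bar>c k\<bar> * weighted_l1_norm s lam (p k))"
proof -
  have W: "0 \<le> wiener_weight s lam n" for n
    using wiener_weight_pos[of s lam n] by simp
  have "weighted_l1_norm s lam d \<le>
          (\<integral>\<^sup>+ n. (\<Sum>k. ennreal \<bar>c k\<bar> * ennreal (wiener_weight s lam n * cmod (p k n)))
             \<partial>count_space UNIV)"
    unfolding weighted_l1_norm_def
  proof (rule nn_integral_mono)
    fix n
    have "ennreal (wiener_weight s lam n * cmod (d n)) = ennreal (wiener_weight s lam n)
      * ennreal (cmod (d n))"
      by (simp add: W ennreal_mult)
    also have "\<dots> \<le> ennreal (wiener_weight s lam n)
      * (\<Sum>k. ennreal (norm (complex_of_real (c k) * p k n)))"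
      by (intro mult_left_mono ennreal_norm_le_suminf_norm assms) simp
    also have "\<dots> = (\<Sum>k. ennreal \<bar>c k\<bar> * ennreal (wiener_weight s lam n * cmod (p k n)))"
      by (simp add: W norm_mult ennreal_mult ennreal_suminf_cmult[symmetric] ac_simps)
    finally show "ennreal (wiener_weight s lam n * cmod (d n)) \<le>
                    (\<Sum>k. ennreal \<bar>c k\<bar> * ennreal (wiener_weight s lam n * cmod (p k n)))" .
  qed
  also have "\<dots> = (\<Sum>k. ennreal \<bar>c k\<bar> * weighted_l1_norm s lam (p k))"
    by (simp add: nn_integral_suminf nn_integral_cmult weighted_l1_norm_def)
  finally show ?thesis .
qed

lemma weighted_l1_norm_0_fourier_power_coeff_le:
  assumes "lam \<ge> 0" and b: "abs_summable_int b"
  shows "weighted_l1_norm 0 lam (fourier_power_coeff b (Suc k)) \<le> weighted_l1_norm 0 lam b ^ Suc k"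
proof (induction k)
  case 0
  then show ?case by (simp add: fourier_power_coeff_1[OF b, unfolded One_nat_def])
next
  case (Suc k)
  have half: "ennreal (1/2) * (X + X) = X" for X :: ennreal
  proof -
    have "ennreal (1/2) * (X + X) = (ennreal (1/2) * ennreal 2) * X"
      by (simp only: mult_2[symmetric] mult.assoc ennreal_numeral)
    also have "ennreal (1/2) * ennreal 2 = ennreal (1/2 * 2)"
      by (rule ennreal_mult[symmetric]) simp_all
    finally show ?thesis by simp
  qed
  have "weighted_l1_norm 0 lam (fourier_power_coeff b (Suc (Suc k))) \<le>
          weighted_l1_norm 0 lam b * weighted_l1_norm 0 lam (fourier_power_coeff b (Suc k))"
    using weighted_l1_norm_convolution_le[OF order_refl \<open>lam \<ge> 0\<close>
      fourier_power_coeff_Suc_sums[OF b, of "Suc k"]]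
    unfolding K_const_0 half .
  also have "\<dots> \<le> weighted_l1_norm 0 lam b * weighted_l1_norm 0 lam b ^ Suc k"
    by (rule mult_left_mono[OF Suc.IH]) simp
  finally show ?case by simp
qed

lemma weighted_l1_norm_fourier_power_coeff_le:
  assumes "s > 0" "lam \<ge> 0" and b: "abs_summable_int b"
    and \<alpha>: "weighted_l1_norm 0 lam b = ennreal \<alpha>" "\<alpha> \<ge> 0"
    and \<beta>: "weighted_l1_norm s lam b = ennreal \<beta>" "\<beta> \<ge> 0"
  shows "weighted_l1_norm s lam (fourier_power_coeff b (Suc k))
    \<le> ennreal (real (Suc k) * (K_const s * \<alpha>) ^ k * \<beta>)"
proof (induction k)
  case 0
  then show ?case using \<beta> by (simp add: fourier_power_coeff_1[OF b, unfolded One_nat_def])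
next
  case (Suc k)
  define K where "K = K_const s"
  have K: "1 \<le> K" unfolding K_def using K_const_ge_1[OF \<open>s > 0\<close>] .
  have "weighted_l1_norm s lam (fourier_power_coeff b (Suc (Suc k))) \<le>
          ennreal K * (ennreal \<beta> * weighted_l1_norm 0 lam (fourier_power_coeff b (Suc k)) +
                       ennreal \<alpha> * weighted_l1_norm s lam (fourier_power_coeff b (Suc k)))"
    using weighted_l1_norm_convolution_le[OF less_imp_le[OF \<open>s > 0\<close>] \<open>lam \<ge> 0\<close>
      fourier_power_coeff_Suc_sums[OF b]]
    by (simp add: K_def \<alpha> \<beta>)
  also have "\<dots> \<le> ennreal K * (ennreal \<beta> * ennreal \<alpha> ^ Suc k + ennreal \<alpha>
    * ennreal (real (Suc k) * (K * \<alpha>) ^ k * \<beta>))"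
    using weighted_l1_norm_0_fourier_power_coeff_le[OF \<open>lam \<ge> 0\<close> b, of k] Suc.IH
    by (intro mult_left_mono add_mono) (simp_all add: \<alpha> K_def)
  also have "\<dots> = ennreal (\<beta> * (K * \<alpha> ^ Suc k) + real (Suc k) * (K * \<alpha>) ^ Suc k * \<beta>)"
    using K \<alpha>(2) \<beta>(2) by (simp add: ennreal_mult ennreal_power field_simps)
  also have "\<dots> \<le> ennreal (real (Suc (Suc k)) * (K * \<alpha>) ^ Suc k * \<beta>)"
  proof (rule ennreal_leI)
    have "K * \<alpha> ^ Suc k \<le> K ^ Suc k * \<alpha> ^ Suc k"
      using K \<alpha>(2) by (intro mult_right_mono)
        (simp_all add: power_increasing[of 1 "Suc k" K, simplified])
    from mult_left_mono[OF this \<beta>(2)]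
    have "\<beta> * (K * \<alpha> ^ Suc k) \<le> (K * \<alpha>) ^ Suc k * \<beta>"
      by (simp add: power_mult_distrib ac_simps)
    then show "\<beta> * (K * \<alpha> ^ Suc k) + real (Suc k) * (K * \<alpha>) ^ Suc k * \<beta> \<le>
                 real (Suc (Suc k)) * (K * \<alpha>) ^ Suc k * \<beta>"
      by (simp add: algebra_simps)
  qed
  finally show ?case by (simp add: K_def)
qed

lemma suminf_ennreal_le_geometric:
  fixes f :: "nat \<Rightarrow> ennreal"
  assumes "f 0 = 0" and f: "\<And>j. f (Suc j) \<le> ennreal (c * q ^ j)"
    and "0 \<le> c" "0 \<le> q" "q < 1"
  shows "(\<Sum>k. f k) \<le> ennreal (c / (1 - q))"
proof -
  have geometric: "(\<lambda>j. c * q ^ j) sums (c / (1 - q))"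
    using sums_mult[OF geometric_sums[of q], of c] assms by simp
  have "f sums ((\<Sum>j. f (Suc j)) + f 0)"
    by (rule sums_Suc[OF summable_sums[OF summableI]])
  then have "(\<Sum>k. f k) = (\<Sum>j. f (Suc j))"
    using \<open>f 0 = 0\<close> by (simp add: sums_iff)
  also have "\<dots> \<le> (\<Sum>j. ennreal (c * q ^ j))"
    by (rule suminf_le[OF f summableI summableI])
  also have "\<dots> = ennreal (\<Sum>j. c * q ^ j)"
    by (rule suminf_ennreal2[OF _ sums_summable[OF geometric]]) (use assms in simp)
  also have "\<dots> = ennreal (c / (1 - q))"
    using sums_unique[OF geometric] by simp
  finally show ?thesis .
qed

lemma G_coeff_series_bound_pos:
  assumes "s > 0" "lam \<ge> 0" and b: "abs_summable_int b"
    and \<alpha>: "weighted_l1_norm 0 lam b = ennreal \<alpha>" "\<alpha> \<ge> 0"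
    and \<beta>: "weighted_l1_norm s lam b = ennreal \<beta>" "\<beta> \<ge> 0"
    and small: "4 * K_const s * \<alpha> < 1"
  shows "(\<Sum>k. ennreal \<bar>G_coeff k\<bar> * weighted_l1_norm s lam (fourier_power_coeff b k)) \<le>
           ennreal (18 * K_const s * \<beta>)"
proof -
  define x where "x = K_const s * \<alpha>"
  have x: "0 \<le> x" "x \<le> 1/4"
    using K_const_pos[of s] \<alpha>(2) small by (simp_all add: x_def)
  have "(\<Sum>k. ennreal \<bar>G_coeff k\<bar> * weighted_l1_norm s lam (fourier_power_coeff b k)) \<le>
          ennreal (4 * \<beta> / (1 - 9/16))"
  proof (rule suminf_ennreal_le_geometric)
    fix j
    have "ennreal \<bar>G_coeff (Suc j)\<bar> * weighted_l1_norm s lam (fourier_power_coeff b (Suc j)) \<le>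
            ennreal \<bar>G_coeff (Suc j)\<bar> * ennreal (real (Suc j) * x ^ j * \<beta>)"
      using weighted_l1_norm_fourier_power_coeff_le[OF assms(1-3) \<alpha> \<beta>, of j]
      by (intro mult_left_mono) (simp_all add: x_def)
    also have "\<dots> = ennreal (\<bar>G_coeff (Suc j)\<bar> * (real (Suc j) * x ^ j * \<beta>))"
      using x \<beta>(2) by (simp add: ennreal_mult)
    also have "\<dots> \<le> ennreal (4 * \<beta> * (9/16) ^ j)"
    proof (rule ennreal_leI)
      have "\<bar>G_coeff (Suc j)\<bar> * (real (Suc j) * x ^ j * \<beta>) \<le> (real j + 2)
        * ((real j + 2) * (1/4) ^ j * \<beta>)"
        using abs_G_coeff_le[of "Suc j"] x \<beta>(2)
        by (intro mult_mono mult_right_mono power_mono) auto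
      also have "\<dots> \<le> (2 * (3/2) ^ j) * ((2 * (3/2) ^ j) * (1/4) ^ j * \<beta>)"
        using add_two_le_power_three_halves[of j] \<beta>(2)
        by (intro mult_mono mult_right_mono) auto
      also have "\<dots> = 4 * \<beta> * ((3/2) ^ j * ((3/2) ^ j * (1/4) ^ j))"
        by (simp add: ac_simps)
      also have "(3/2) ^ j * ((3/2) ^ j * (1/4) ^ j) = (9/16::real) ^ j"
        by (simp only: power_mult_distrib[symmetric]) simp
      finally show "\<bar>G_coeff (Suc j)\<bar> * (real (Suc j) * x ^ j * \<beta>) \<le> 4 * \<beta> * (9/16) ^ j" .
    qed
    finally show "ennreal \<bar>G_coeff (Suc j)\<bar> * weighted_l1_norm s lam
      (fourier_power_coeff b (Suc j)) \<le>
                    ennreal (4 * \<beta> * (9/16) ^ j)" .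
  qed (use \<beta>(2) in \<open>simp_all add: G_coeff_def\<close>)
  also have "\<dots> \<le> ennreal (18 * \<beta>)"
    using \<beta>(2) by (intro ennreal_leI) simp
  also have "\<dots> \<le> ennreal (18 * K_const s * \<beta>)"
    using mult_right_mono[OF K_const_ge_1[OF \<open>s > 0\<close>] \<beta>(2)] by (intro ennreal_leI) simp
  finally show ?thesis .
qed

lemma G_coeff_series_bound_0:
  assumes "lam \<ge> 0" and b: "abs_summable_int b"
    and \<alpha>: "weighted_l1_norm 0 lam b = ennreal \<alpha>" "\<alpha> \<ge> 0" and small: "\<alpha> < 1/2"
  shows "(\<Sum>k. ennreal \<bar>G_coeff k\<bar> * weighted_l1_norm 0 lam (fourier_power_coeff b k)) \<le>
           ennreal (18 * K_const 0 * \<alpha>)"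
proof -
  have "(\<Sum>k. ennreal \<bar>G_coeff k\<bar> * weighted_l1_norm 0 lam (fourier_power_coeff b k)) \<le>
          ennreal (2 * \<alpha> / (1 - 3/4))"
  proof (rule suminf_ennreal_le_geometric)
    fix j
    have "ennreal \<bar>G_coeff (Suc j)\<bar> * weighted_l1_norm 0 lam (fourier_power_coeff b (Suc j)) \<le>
            ennreal \<bar>G_coeff (Suc j)\<bar> * ennreal (\<alpha> ^ Suc j)"
      using weighted_l1_norm_0_fourier_power_coeff_le[OF assms(1,2), of j] \<alpha>
      by (intro mult_left_mono) (simp_all add: ennreal_power flip: ennreal_mult)
    also have "\<dots> = ennreal (\<bar>G_coeff (Suc j)\<bar> * \<alpha> ^ Suc j)"
      using \<alpha>(2) by (simp add: ennreal_mult)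
    also have "\<dots> \<le> ennreal (2 * \<alpha> * (3/4) ^ j)"
    proof (rule ennreal_leI)
      have "\<bar>G_coeff (Suc j)\<bar> * \<alpha> ^ Suc j \<le> (2 * (3/2) ^ j) * (\<alpha> * (1/2) ^ j)"
        using abs_G_coeff_le[of "Suc j"] add_two_le_power_three_halves[of j] \<alpha>(2) small
        by (simp only: power_Suc, intro mult_mono mult_left_mono power_mono) auto
      also have "\<dots> = 2 * \<alpha> * ((3/2) ^ j * (1/2) ^ j)"
        by (simp add: ac_simps)
      also have "(3/2) ^ j * (1/2) ^ j = (3/4::real) ^ j"
        by (simp only: power_mult_distrib[symmetric]) simp
      finally show "\<bar>G_coeff (Suc j)\<bar> * \<alpha> ^ Suc j \<le> 2 * \<alpha> * (3/4) ^ j" .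
    qed
    finally show "ennreal \<bar>G_coeff (Suc j)\<bar> * weighted_l1_norm 0 lam
      (fourier_power_coeff b (Suc j)) \<le>
                    ennreal (2 * \<alpha> * (3/4) ^ j)" .
  qed (use \<alpha>(2) in \<open>simp_all add: G_coeff_def\<close>)
  also have "\<dots> \<le> ennreal (18 * K_const 0 * \<alpha>)"
    using \<alpha>(2) by (intro ennreal_leI) (simp add: K_const_0)
  finally show ?thesis .
qed

lemma AE_abs_le_l1_norm_int:
  assumes b: "abs_summable_int b"
    and v: "AE x in lborel. x \<in> {0..2*pi} \<longrightarrow> complex_of_real (v x) = fourier_series b x"
  shows "AE x in lborel. x \<in> {0..2*pi} \<longrightarrow> \<bar>v x\<bar> \<le> l1_norm_int b"
  using v
proof eventually_elim
  case (elim x)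
  show ?case
  proof
    assume "x \<in> {0..2*pi}"
    then have "norm (complex_of_real (v x)) \<le> l1_norm_int b"
      using elim norm_fourier_series_le[OF b, of x] by simp
    then show "\<bar>v x\<bar> \<le> l1_norm_int b" by simp
  qed
qed

lemma wiener_norm_G_fun_comp_le:
  assumes "s \<ge> 0" "lam \<ge> 0" and v: "in_L1_torus v"
    and \<alpha>: "wiener_norm 0 lam v = ennreal \<alpha>" "\<alpha> \<ge> 0"
    and \<beta>: "wiener_norm s lam v = ennreal \<beta>" "\<beta> \<ge> 0"
    and small: "4 * K_const s * \<alpha> < 1"
  shows "in_L1_torus (\<lambda>x. G_fun (v x))"
    and "wiener_norm s lam (\<lambda>x. G_fun (v x)) \<le> ennreal (18 * K_const s * \<beta>)"
proof -
  define a where "a = fourier_coeff v"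
  have \<alpha>_a: "weighted_l1_norm 0 lam a = ennreal \<alpha>" and \<beta>_a: "weighted_l1_norm s lam a = ennreal \<beta>"
    using \<alpha> \<beta> by (simp_all add: a_def wiener_norm_eq_weighted_l1_norm)
  have "\<alpha> < 1/2"
    using small mult_right_mono[OF K_const_ge_half[OF \<open>s \<ge> 0\<close>] \<alpha>(2)] by linarith
  have "weighted_l1_norm 0 lam a < \<infinity>"
    using \<alpha>_a by simp
  note a = abs_summable_if_weighted_l1_norm_finite[OF \<open>lam \<ge> 0\<close> this, unfolded \<alpha>_a]
  have r: "l1_norm_int a \<le> 1/2"
    using a(2) \<alpha>(2) \<open>\<alpha> < 1/2\<close> by simp
  have series: "AE x in lborel. x \<in> {0..2*pi} \<longrightarrow> complex_of_real (v x) = fourier_series a x"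
    using AE_eq_fourier_series[OF v] a(1) by (simp add: a_def)
  show G: "in_L1_torus (\<lambda>x. G_fun (v x))"
    by (rule set_integrable_G_fun_comp[OF v AE_abs_le_l1_norm_int[OF a(1) series] r])
  have "wiener_norm s lam (\<lambda>x. G_fun (v x)) \<le>
          (\<Sum>k. ennreal \<bar>G_coeff k\<bar> * weighted_l1_norm s lam (fourier_power_coeff a k))"
    unfolding wiener_norm_eq_weighted_l1_norm
    by (rule weighted_l1_norm_sums_le[OF fourier_coeff_G_fun_comp_sums[OF G a(1) r series]])
  also have "\<dots> \<le> ennreal (18 * K_const s * \<beta>)"
  proof (cases "s = 0")
    case True
    with \<alpha>_a \<beta>_a \<alpha>(2) \<beta>(2) have "\<alpha> = \<beta>"
      by simp
    with True show ?thesis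
      using G_coeff_series_bound_0[OF \<open>lam \<ge> 0\<close> a(1) \<alpha>_a \<alpha>(2) \<open>\<alpha> < 1/2\<close>] by simp
  next
    case False
    with \<open>s \<ge> 0\<close> have "s > 0" by simp
    from G_coeff_series_bound_pos[OF this \<open>lam \<ge> 0\<close> a(1) \<alpha>_a \<alpha>(2) \<beta>_a \<beta>(2) small]
    show ?thesis .
  qed
  finally show "wiener_norm s lam (\<lambda>x. G_fun (v x)) \<le> ennreal (18 * K_const s * \<beta>)" .
qed

theorem lemma3p4:
  fixes s lam :: real and v :: "real \<Rightarrow> real"
  assumes "s \<ge> 0" and "lam \<ge> 0"
    and "in_L1_torus v" and "wiener_norm s lam v < \<infinity>"
    and "ennreal (4 * K_const s) * wiener_norm 0 lam v < 1"
  shows "in_L1_torus (\<lambda>x. G_fun (v x)) \<and>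
         wiener_norm s lam (\<lambda>x. G_fun (v x)) \<le> ennreal (18 * K_const s) * wiener_norm s lam v"
proof -
  have K: "0 < K_const s"
    by (rule K_const_pos)
  have "wiener_norm 0 lam v < \<infinity>"
  proof (rule ccontr)
    assume "\<not> wiener_norm 0 lam v < \<infinity>"
    then have "ennreal (4 * K_const s) * wiener_norm 0 lam v = \<infinity>"
      using K by (simp add: ennreal_mult_eq_top_iff less_top[symmetric])
    with assms(5) show False by simp
  qed
  then obtain \<alpha> where \<alpha>: "wiener_norm 0 lam v = ennreal \<alpha>" "\<alpha> \<ge> 0"
    unfolding infinity_ennreal_def less_top_ennreal by blast
  obtain \<beta> where \<beta>: "wiener_norm s lam v = ennreal \<beta>" "\<beta> \<ge> 0"
    using assms(4) unfolding infinity_ennreal_def less_top_ennreal by blast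
  have "ennreal (4 * K_const s * \<alpha>) < ennreal 1"
    using assms(5) K \<alpha> by (simp add: ennreal_mult)
  then have "4 * K_const s * \<alpha> < 1"
    using K \<alpha>(2) by (subst (asm) ennreal_less_iff) simp_all
  from wiener_norm_G_fun_comp_le[OF assms(1-3) \<alpha> \<beta> this] show ?thesis
    using K \<beta> by (simp add: ennreal_mult)
qed

end
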